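(* Let $d$ be a positive integer, $b\geqslant 5$ an integer, $a>0$ a real number with $\zeta=\log_b a\notin\mathbb{Q}$. Let $\mathbf{w}=(\mathbf{w}_n)_{n\geqslant1}$ where $\mathbf{w}_n$ is the most significant digit of $a^{n^d}$ in base $b$. Define $f:\mathbb{T}^d\to\mathbb{T}^d$ by $f(x)_i=\{\zeta+\sum_{j=1}^{i}\binom{i}{j}x_j\}$ for $i=1,\dots,d$, and for $t\in\{1,\dots,b-1\}$ let $U_t=\{x\in\mathbb{T}^d:\log_b t\leqslant x_d<\log_b(t+1)\}$. For a finite word $\mathbf{u}=u_1\cdots u_n$ over $\{1,\dots,b-1\}$ set $U_{\mathbf{u}}=U_{u_1}\cap f^{-1}(U_{u_2})\cap\cdots\cap f^{-(n-1)}(U_{u_n})$. Then $\mathbf{u}$ is a factor of $\mathbf{w}$ if and only if $U_{\mathbf{u}}$ has non-empty interior in $\mathbb{T}^d$.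
   Context: $\mathbb{T}^d=\mathbb{R}^d/\mathbb{Z}^d$ identified with $[0,1)^d$, $\{y\}$ is the fractional part. The most significant digit of a nonzero real $x$ in base $b$ is the unique $j\in\{1,\dots,b-1\}$ with $b^m j\leqslant|x|<b^m(j+1)$ for some integer $m$. A finite word $\mathbf{u}$ of length $n$ is a factor of $\mathbf{w}$ if $\mathbf{u}=\mathbf{w}_k\mathbf{w}_{k+1}\cdots\mathbf{w}_{k+n-1}$ for some $k\geqslant1$. (With $v_k=(\{\zeta k\},\dots,\{\zeta k^d\})$ one has $v_{k+1}=f(v_k)$ and $\mathbf{w}_k=t$ iff $v_k\in U_t$.) *)

theory Defs
  imports Complex_Main
begin

text \<open>Points of the torus T^d = R^d/Z^d are represented by their canonical
 representatives in [0,1)^d, as functions nat => real that are supported on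
 the coordinates 1..d (other coordinates are 0).\<close>

definition torus :: "nat \<Rightarrow> (nat \<Rightarrow> real) set" where
  "torus d = {x. (\<forall>i\<in>{1..d}. 0 \<le> x i \<and> x i < 1) \<and> (\<forall>i. i \<notin> {1..d} \<longrightarrow> x i = 0)}"

definition torus_proj :: "nat \<Rightarrow> (nat \<Rightarrow> real) \<Rightarrow> (nat \<Rightarrow> real)" where
  "torus_proj d y = (\<lambda>i. if i \<in> {1..d} then frac (y i) else 0)"

text \<open>Open sets of T^d in the quotient topology: V is open iff its preimage
 under the quotient map is open in R^d.\<close>
definition torus_open :: "nat \<Rightarrow> (nat \<Rightarrow> real) set \<Rightarrow> bool" where
  "torus_open d V \<longleftrightarrow> V \<subseteq> torus d \<and>
     (\<forall>y. torus_proj d y \<in> V \<longrightarrow>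
        (\<exists>e>0. \<forall>z. (\<forall>i\<in>{1..d}. \<bar>z i - y i\<bar> < e) \<longrightarrow> torus_proj d z \<in> V))"

definition torus_nonempty_interior :: "nat \<Rightarrow> (nat \<Rightarrow> real) set \<Rightarrow> bool" where
  "torus_nonempty_interior d U \<longleftrightarrow> (\<exists>V. torus_open d V \<and> V \<noteq> {} \<and> V \<subseteq> U)"

definition msd :: "nat \<Rightarrow> real \<Rightarrow> nat" where
  "msd b x = (THE j. j \<in> {1..b-1} \<and>
      (\<exists>m::int. real b powr of_int m * real j \<le> \<bar>x\<bar> \<and> \<bar>x\<bar> < real b powr of_int m * real (j+1)))"

definition wseq :: "nat \<Rightarrow> real \<Rightarrow> nat \<Rightarrow> nat \<Rightarrow> nat" where
  "wseq b a d n = msd b (a ^ (n ^ d))"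

definition is_factor :: "nat list \<Rightarrow> (nat \<Rightarrow> nat) \<Rightarrow> bool" where
  "is_factor u w \<longleftrightarrow> (\<exists>k\<ge>1. \<forall>i<length u. u ! i = w (k + i))"

definition tmap :: "nat \<Rightarrow> real \<Rightarrow> (nat \<Rightarrow> real) \<Rightarrow> (nat \<Rightarrow> real)" where
  "tmap d \<zeta> x = (\<lambda>i. if i \<in> {1..d} then frac (\<zeta> + (\<Sum>j=1..i. real (i choose j) * x j)) else 0)"

definition Uset :: "nat \<Rightarrow> nat \<Rightarrow> nat \<Rightarrow> (nat \<Rightarrow> real) set" where
  "Uset b d t = {x \<in> torus d. log (real b) (real t) \<le> x d \<and> x d < log (real b) (real t + 1)}"

definition Uword :: "nat \<Rightarrow> nat \<Rightarrow> real \<Rightarrow> nat list \<Rightarrow> (nat \<Rightarrow> real) set" where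
  "Uword b d \<zeta> u = {x \<in> torus d. \<forall>k<length u. (tmap d \<zeta> ^^ k) x \<in> Uset b d (u ! k)}"

end

theory Submission
  imports Defs "HOL-Analysis.Analysis"
begin

text \<open>
  Let \<open>v\<^sub>k = ({\<zeta>k}, {\<zeta>k\<^sup>2}, \<dots>, {\<zeta>k\<^sup>d})\<close>. By the binomial theorem
  \<open>f(v\<^sub>k) = v\<^sub>k\<^sub>+\<^sub>1\<close>, and the leading digit of \<open>a\<^bsup>k\<^sup>d\<^esup>\<close> is determined by the last
  coordinate \<open>{\<zeta>k\<^sup>d} = {log\<^sub>b a\<^bsup>k\<^sup>d\<^esup>}\<close>; hence \<open>u\<close> occurs in \<open>w\<close> at position \<open>k\<close>
  exactly when \<open>v\<^sub>k \<in> U\<^sub>u\<close>.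

  If \<open>v\<^sub>k \<in> U\<^sub>u\<close>, then \<open>U\<^sub>u\<close> contains a small box above \<open>v\<^sub>k\<close>: the intervals defining
  \<open>U\<^sub>t\<close> are closed on the left, raising \<open>x\<^sub>d\<close> by \<open>s\<close> raises the last coordinate of
  every \<open>f\<^sup>n(x)\<close> by exactly \<open>s\<close>, and \<open>f\<close> is Lipschitz.

  Conversely, the orbit \<open>(v\<^sub>k)\<close> is dense. For every nonzero integer frequency \<open>h\<close> the
  averages of \<open>e(h \<cdot> v\<^sub>k)\<close> tend to \<open>0\<close> (Weyl): van der Corput's difference trick lowers
  the degree of the polynomial phase until it becomes linear with an irrational slope.
  Expanding the kernel \<open>\<Prod>\<^sub>i cos\<^bsup>2M\<^esup>(\<pi>(x\<^sub>i - c\<^sub>i))\<close> into characters, its averages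
  along the orbit tend to its mean \<open>(binom(2M,M)/4\<^sup>M)\<^sup>d \<ge> (2M+1)\<^sup>-\<^sup>d\<close>, while away
  from \<open>c\<close> the kernel is at most \<open>q\<^sup>M\<close> with \<open>q < 1\<close>. For large \<open>M\<close> this forces the
  orbit into every neighbourhood of \<open>c\<close>.
\<close>

section \<open>Van der Corput's inequality\<close>

lemma norm_sum_shift_diff_le:
  fixes f :: "nat \<Rightarrow> 'a::real_normed_vector"
  assumes "\<And>k. norm (f k) \<le> B"
  shows "norm ((\<Sum>k<N. f (k + h)) - (\<Sum>k<N. f k)) \<le> 2 * real h * B"
proof -
  have "(\<Sum>k<N. f (k + h)) + (\<Sum>k<h. f k) = (\<Sum>k<N. f k) + (\<Sum>k\<in>{N..<N+h}. f k)"
  proof -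
    have "(\<Sum>k<N. f (k + h)) = (\<Sum>k\<in>{h..<N+h}. f k)"
      by (metis lessThan_atLeast0 sum.shift_bounds_nat_ivl add_0)
    moreover have "(\<Sum>k<N+h. f k) = (\<Sum>k<h. f k) + (\<Sum>k\<in>{h..<N+h}. f k)"
      by (metis le_add2 lessThan_atLeast0 sum.atLeastLessThan_concat zero_le)
    moreover have "(\<Sum>k<N+h. f k) = (\<Sum>k<N. f k) + (\<Sum>k\<in>{N..<N+h}. f k)"
      by (metis le_add1 lessThan_atLeast0 sum.atLeastLessThan_concat zero_le)
    ultimately show ?thesis by (simp add: add.commute)
  qed
  then have "(\<Sum>k<N. f (k + h)) - (\<Sum>k<N. f k) = (\<Sum>k\<in>{N..<N+h}. f k) - (\<Sum>k<h. f k)"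
    by (simp add: algebra_simps)
  also have "norm \<dots> \<le> norm (\<Sum>k\<in>{N..<N+h}. f k) + norm (\<Sum>k<h. f k)"
    by (rule norm_triangle_ineq4)
  also have "\<dots> \<le> real h * B + real h * B"
    using sum_norm_le[of "{N..<N+h}" f "\<lambda>_. B"] sum_norm_le[of "{..<h}" f "\<lambda>_. B"] assms
    by (intro add_mono) simp_all
  finally show ?thesis by (simp add: mult_ac)
qed

lemma norm_window_sum_approx:
  fixes u :: "nat \<Rightarrow> 'a::real_normed_vector"
  assumes "\<And>k. norm (u k) \<le> 1"
  shows "norm (of_nat H *\<^sub>R (\<Sum>k<N. u k) - (\<Sum>k<N. \<Sum>h<H. u (k + h))) \<le> 2 * (real H)\<^sup>2"
proof -
  have "of_nat H *\<^sub>R (\<Sum>k<N. u k) - (\<Sum>k<N. \<Sum>h<H. u (k + h))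
      = (\<Sum>h<H. (\<Sum>k<N. u k) - (\<Sum>k<N. u (k + h)))"
    by (simp add: sum_subtractf sum.swap[of _ "{..<N}"] scaleR_sum_right sum_constant_scaleR)
  also have "norm \<dots> \<le> (\<Sum>h<H. 2 * real H)"
  proof (rule sum_norm_le)
    fix h assume "h \<in> {..<H}"
    moreover have "norm ((\<Sum>k<N. u k) - (\<Sum>k<N. u (k + h))) \<le> 2 * real h * 1"
      using norm_sum_shift_diff_le[where f = u and B = 1 and N = N and h = h] assms
      by (simp add: norm_minus_commute)
    ultimately show "norm ((\<Sum>k<N. u k) - (\<Sum>k<N. u (k + h))) \<le> 2 * real H"
      by simp
  qed
  finally show ?thesis by (simp add: power2_eq_square)
qed

lemma norm_correlation_shift_le:
  fixes u :: "nat \<Rightarrow> complex"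
  assumes "\<And>k. norm (u k) \<le> 1"
  shows "norm (\<Sum>k<N. u (k + h + r) * cnj (u (k + h)))
           \<le> norm (\<Sum>k<N. u (k + r) * cnj (u k)) + 2 * real h"
proof -
  define g where "g k = u (k + r) * cnj (u k)" for k
  have "norm ((\<Sum>k<N. g (k + h)) - (\<Sum>k<N. g k)) \<le> 2 * real h * 1"
    by (rule norm_sum_shift_diff_le) (simp add: g_def norm_mult assms mult_le_one)
  then have "norm (\<Sum>k<N. g (k + h)) \<le> norm (\<Sum>k<N. g k) + 2 * real h"
    using norm_triangle_ineq2[of "\<Sum>k<N. g (k + h)" "\<Sum>k<N. g k"] by linarith
  then show ?thesis
    unfolding g_def .
qed

lemma sum_norm_window_sq:
  fixes u :: "nat \<Rightarrow> complex"
  shows "complex_of_real (\<Sum>k<N. (norm (\<Sum>h<H. u (k + h)))\<^sup>2)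
           = (\<Sum>h<H. \<Sum>h'<H. \<Sum>k<N. u (k + h) * cnj (u (k + h')))"
proof -
  have "complex_of_real (\<Sum>k<N. (norm (\<Sum>h<H. u (k + h)))\<^sup>2)
      = (\<Sum>k<N. (\<Sum>h<H. u (k + h)) * cnj (\<Sum>h<H. u (k + h)))"
    by (simp add: complex_norm_square del: of_real_power)
  also have "\<dots> = (\<Sum>k<N. \<Sum>h<H. \<Sum>h'<H. u (k + h) * cnj (u (k + h')))"
    by (simp add: sum_product)
  finally show ?thesis by (simp add: sum.swap[of _ "{..<N}"])
qed

lemma sum_norm_window_sq_le:
  fixes u :: "nat \<Rightarrow> complex" and N H :: nat
  assumes u: "\<And>k. norm (u k) \<le> 1"
  defines "D \<equiv> (\<Sum>r\<in>{1..<H}. norm (\<Sum>k<N. u (k + r) * cnj (u k)))"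
  shows "(\<Sum>k<N. (norm (\<Sum>h<H. u (k + h)))\<^sup>2) \<le> real H * real N + (real H)\<^sup>2 * (D + 2 * real H)"
proof -
  define G where "G h h' = (\<Sum>k<N. u (k + h) * cnj (u (k + h')))" for h h'
  have off_diag: "norm (G h h') \<le> D + 2 * real H" if "h < H" "h' < h" for h h'
  proof -
    have "G h h' = (\<Sum>k<N. u (k + h' + (h - h')) * cnj (u (k + h')))"
      unfolding G_def using that by (intro sum.cong) (auto simp: algebra_simps)
    also have "norm \<dots> \<le> norm (\<Sum>k<N. u (k + (h - h')) * cnj (u k)) + 2 * real h'"
      by (rule norm_correlation_shift_le[OF u])
    also have "norm (\<Sum>k<N. u (k + (h - h')) * cnj (u k)) \<le> D"
      unfolding D_def using that by (intro member_le_sum) auto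
    finally show ?thesis using that by simp
  qed
  have entry: "norm (G h h') \<le> (if h' = h then real N else 0) + (D + 2 * real H)"
    if "h < H" "h' < H" for h h'
  proof -
    have D0: "D \<ge> 0" unfolding D_def by (intro sum_nonneg) auto
    have "norm (G h h) \<le> (\<Sum>k<N. norm (u (k + h) * cnj (u (k + h))))"
      unfolding G_def by (rule norm_sum)
    also have "\<dots> \<le> (\<Sum>k<N. 1)"
      by (intro sum_mono) (simp add: norm_mult u mult_le_one)
    finally have diag: "norm (G h h) \<le> real N" by simp
    have "G h h' = cnj (G h' h)" unfolding G_def by (simp add: mult.commute)
    then show ?thesis
      using that diag off_diag[of h h'] off_diag[of h' h] D0 by (cases h h' rule: linorder_cases) auto
  qed
  have "(\<Sum>k<N. (norm (\<Sum>h<H. u (k + h)))\<^sup>2) = norm (\<Sum>h<H. \<Sum>h'<H. G h h')"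
    unfolding G_def sum_norm_window_sq[symmetric] norm_of_real by (simp add: sum_nonneg)
  also have "\<dots> \<le> (\<Sum>h<H. \<Sum>h'<H. norm (G h h'))"
    by (intro order.trans[OF norm_sum] sum_mono norm_sum)
  also have "\<dots> \<le> (\<Sum>h<H. \<Sum>h'<H. (if h' = h then real N else 0) + (D + 2 * real H))"
    using entry by (intro sum_mono) auto
  also have "\<dots> = real H * real N + (real H)\<^sup>2 * (D + 2 * real H)"
    by (simp add: sum.distrib power2_eq_square algebra_simps)
  finally show ?thesis .
qed

lemma van_der_corput_inequality:
  fixes u :: "nat \<Rightarrow> complex" and N H :: nat
  assumes u: "\<And>k. norm (u k) \<le> 1" and N: "N \<ge> 1" and H: "H \<ge> 1"
  defines "D \<equiv> (\<Sum>r\<in>{1..<H}. norm (\<Sum>k<N. u (k + r) * cnj (u k)))"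
  shows "norm ((\<Sum>k<N. u k) / of_nat N)
           \<le> sqrt (1 / real H + (D + 2 * real H) / real N) + 2 * real H / real N"
proof -
  define X where "X = D + 2 * real H"
  define W where "W = (\<Sum>k<N. \<Sum>h<H. u (k + h))"
  have "(norm W)\<^sup>2 \<le> (\<Sum>k<N. norm (\<Sum>h<H. u (k + h)))\<^sup>2"
    unfolding W_def by (intro power_mono norm_sum) simp
  also have "\<dots> \<le> real N * (\<Sum>k<N. (norm (\<Sum>h<H. u (k + h)))\<^sup>2)"
    using sum_squared_le_sum_of_squares[of "\<lambda>k. norm (\<Sum>h<H. u (k + h))" "{..<N}"]
    by (simp add: mult.commute)
  also have "\<dots> \<le> real N * (real H * real N + (real H)\<^sup>2 * X)"
    unfolding X_def D_def by (intro mult_left_mono sum_norm_window_sq_le[OF u]) simp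
  finally have W_le: "norm W \<le> sqrt (real N * (real H * real N + (real H)\<^sup>2 * X))"
    by (simp add: real_le_rsqrt)
  have "real H * norm (\<Sum>k<N. u k) \<le> norm W + 2 * (real H)\<^sup>2"
    using norm_window_sum_approx[where u = u and H = H and N = N] u
      norm_triangle_ineq2[of "real H *\<^sub>R (\<Sum>k<N. u k)" W]
    unfolding W_def by simp
  then have "norm (\<Sum>k<N. u k) / real N
      \<le> sqrt (real N * (real H * real N + (real H)\<^sup>2 * X)) / (real H * real N) + 2 * real H / real N"
    using W_le N H by (simp add: field_simps power2_eq_square)
  also have "sqrt (real N * (real H * real N + (real H)\<^sup>2 * X)) / (real H * real N)
      = sqrt (real N * (real H * real N + (real H)\<^sup>2 * X) / (real H * real N)\<^sup>2)"
    using N H by (simp add: real_sqrt_divide)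
  also have "real N * (real H * real N + (real H)\<^sup>2 * X) / (real H * real N)\<^sup>2
      = 1 / real H + X / real N"
    using N H by (simp add: field_simps power2_eq_square)
  finally show ?thesis unfolding X_def by (simp add: norm_divide)
qed

lemma van_der_corput:
  fixes u :: "nat \<Rightarrow> complex"
  assumes u: "\<And>k. norm (u k) \<le> 1"
    and corr: "\<And>r. r \<ge> 1 \<Longrightarrow> (\<lambda>N. (\<Sum>k<N. u (k + r) * cnj (u k)) / of_nat N) \<longlonglongrightarrow> 0"
  shows "(\<lambda>N. (\<Sum>k<N. u k) / of_nat N) \<longlonglongrightarrow> 0"
proof (rule tendstoI)
  fix \<epsilon> :: real assume "\<epsilon> > 0"
  have "\<epsilon>\<^sup>2 > 0" using \<open>\<epsilon> > 0\<close> by simp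
  then obtain n where n: "inverse (real (Suc n)) < \<epsilon>\<^sup>2"
    using reals_Archimedean by blast
  define H where "H = Suc n"
  define D where "D N = (\<Sum>r\<in>{1..<H}. norm (\<Sum>k<N. u (k + r) * cnj (u k)))" for N
  have "(\<lambda>N. \<Sum>r\<in>{1..<H}. norm ((\<Sum>k<N. u (k + r) * cnj (u k)) / of_nat N)) \<longlonglongrightarrow> (\<Sum>r\<in>{1..<H}. 0)"
    by (intro tendsto_sum tendsto_norm_zero corr) auto
  moreover have "(\<Sum>r\<in>{1..<H}. norm ((\<Sum>k<N. u (k + r) * cnj (u k)) / of_nat N)) = D N / real N"
    for N
  proof -
    have "(\<Sum>r\<in>{1..<H}. norm ((\<Sum>k<N. u (k + r) * cnj (u k)) / of_nat N))
        = (\<Sum>r\<in>{1..<H}. norm (\<Sum>k<N. u (k + r) * cnj (u k)) / real N)"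
      by (simp only: norm_divide norm_of_nat)
    also have "\<dots> = D N / real N"
      unfolding D_def by (rule sum_divide_distrib[symmetric])
    finally show ?thesis .
  qed
  ultimately have "(\<lambda>N. D N / real N) \<longlonglongrightarrow> 0"
    by simp
  then have "(\<lambda>N. sqrt (1 / real H + (D N / real N + 2 * real H / real N)) + 2 * real H / real N)
      \<longlonglongrightarrow> sqrt (1 / real H + (0 + 0)) + 0"
    by (intro tendsto_intros lim_const_over_n)
  moreover have "sqrt (1 / real H + (0 + 0)) + 0 < \<epsilon>"
    using n \<open>\<epsilon> > 0\<close> real_sqrt_less_mono[of "1 / real H" "\<epsilon>\<^sup>2"] by (simp add: H_def field_simps)
  ultimately have "\<forall>\<^sub>F N in sequentially.
      sqrt (1 / real H + (D N / real N + 2 * real H / real N)) + 2 * real H / real N < \<epsilon>"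
    by (rule order_tendstoD)
  moreover have "\<forall>\<^sub>F N in sequentially. N \<ge> 1"
    by (rule eventually_ge_at_top)
  ultimately show "\<forall>\<^sub>F N in sequentially. dist ((\<Sum>k<N. u k) / of_nat N) 0 < \<epsilon>"
  proof eventually_elim
    case (elim N)
    have "norm ((\<Sum>k<N. u k) / of_nat N)
        \<le> sqrt (1 / real H + (D N + 2 * real H) / real N) + 2 * real H / real N"
      using van_der_corput_inequality[where u = u and N = N and H = H] u elim(2)
      by (simp add: D_def H_def)
    with elim(1) show ?case by (simp add: add_divide_distrib)
  qed
qed

section \<open>Weyl sums\<close>

definition cis2pi :: "real \<Rightarrow> complex" where
  "cis2pi t = cis (2 * pi * t)"

lemma norm_cis2pi [simp]: "norm (cis2pi t) = 1"
  by (simp add: cis2pi_def)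

lemma cis2pi_0 [simp]: "cis2pi 0 = 1"
  by (simp add: cis2pi_def)

lemma cis2pi_add: "cis2pi (s + t) = cis2pi s * cis2pi t"
  by (simp add: cis2pi_def cis_mult distrib_left)

lemma cis2pi_diff: "cis2pi (s - t) = cis2pi s * cnj (cis2pi t)"
  by (simp add: cis2pi_def cis_mult cis_cnj right_diff_distrib)

lemma cis2pi_of_nat_mult: "cis2pi (real k * t) = cis2pi t ^ k"
  unfolding cis2pi_def Complex.DeMoivre by (simp only: mult.left_commute)

lemma cis2pi_sum: "finite I \<Longrightarrow> cis2pi (\<Sum>i\<in>I. f i) = (\<Prod>i\<in>I. cis2pi (f i))"
  by (induction I rule: finite_induct) (auto simp: cis2pi_add)

lemma cis2pi_neq_1: "t \<notin> \<rat> \<Longrightarrow> cis2pi t \<noteq> 1"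
proof
  assume "cis2pi t = 1"
  then have "exp (\<i> * complex_of_real (2 * pi * t)) = 1"
    by (simp add: cis2pi_def cis_conv_exp)
  then obtain n :: int where "2 * pi * t = of_int (2 * n) * pi"
    by (auto simp: exp_eq_1)
  then have "t = of_int n" by simp
  then show "t \<notin> \<rat> \<Longrightarrow> False" by simp
qed

definition fwd_diff :: "(nat \<Rightarrow> real) \<Rightarrow> nat \<Rightarrow> real" where
  "fwd_diff p k = p (Suc k) - p k"

lemma funpow_fwd_diff_diff:
  "(fwd_diff ^^ m) (\<lambda>k. f k - g k) = (\<lambda>k. (fwd_diff ^^ m) f k - (fwd_diff ^^ m) g k)"
  by (induction m) (auto simp: fwd_diff_def algebra_simps)

lemma funpow_fwd_diff_shift:
  "(fwd_diff ^^ m) (\<lambda>k. f (k + r)) = (\<lambda>k. (fwd_diff ^^ m) f (k + r))"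
  by (induction m) (auto simp: fwd_diff_def)

lemma funpow_fwd_diff_lincomb:
  "(fwd_diff ^^ m) (\<lambda>k. \<Sum>j\<in>S. a j * f j k) = (\<lambda>k. \<Sum>j\<in>S. a j * (fwd_diff ^^ m) (f j) k)"
  by (induction m) (auto simp: fwd_diff_def sum_subtractf right_diff_distrib)

lemma fwd_diff_const_imp_linear:
  assumes "\<And>k. fwd_diff g k = c"
  shows "g (k + r) = g k + real r * c"
  using assms by (induction r) (auto simp: fwd_diff_def algebra_simps)

lemma fwd_diff_power:
  "fwd_diff (\<lambda>k. (real k + c) ^ i) = (\<lambda>k. \<Sum>j<i. real (i choose j) * (real k + c) ^ j)"
proof
  fix k
  have "(real (Suc k) + c) ^ i = (\<Sum>j\<le>i. real (i choose j) * (real k + c) ^ j)"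
    using binomial_ring[of "real k + c" 1 i] by (simp add: algebra_simps)
  also have "\<dots> = (\<Sum>j<i. real (i choose j) * (real k + c) ^ j) + (real k + c) ^ i"
    by (simp add: lessThan_Suc_atMost[symmetric])
  finally show "fwd_diff (\<lambda>k. (real k + c) ^ i) k = (\<Sum>j<i. real (i choose j) * (real k + c) ^ j)"
    by (simp add: fwd_diff_def)
qed

lemma funpow_fwd_diff_power:
  "i \<le> m \<Longrightarrow> (fwd_diff ^^ m) (\<lambda>k. (real k + c) ^ i) = (\<lambda>k. if i = m then fact m else 0)"
proof (induction m arbitrary: i)
  case 0
  then show ?case by simp
next
  case (Suc m)
  have "(fwd_diff ^^ Suc m) (\<lambda>k. (real k + c) ^ i) = (fwd_diff ^^ m) (fwd_diff (\<lambda>k. (real k + c) ^ i))"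
    by (simp only: funpow_Suc_right comp_def)
  also have "\<dots> = (\<lambda>k. \<Sum>j<i. real (i choose j) * (fwd_diff ^^ m) (\<lambda>k. (real k + c) ^ j) k)"
    unfolding fwd_diff_power by (rule funpow_fwd_diff_lincomb)
  also have "\<dots> = (\<lambda>k. \<Sum>j<i. real (i choose j) * (if j = m then fact m else 0))"
    using Suc by (intro ext sum.cong refl) auto
  also have "\<dots> = (\<lambda>k. if i = Suc m then fact (Suc m) else 0)"
  proof (cases "i = Suc m")
    case True
    then show ?thesis
      by (simp add: if_distrib[of "\<lambda>x. real (i choose _) * x"] cong: if_cong)
  next
    case False
    with Suc.prems show ?thesis by (intro ext sum.neutral) auto
  qed
  finally show ?case .
qed

lemma weyl_sum_linear:
  assumes "\<gamma> \<notin> \<rat>" and "\<And>k. fwd_diff p k = \<gamma>"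
  shows "(\<lambda>N. (\<Sum>k<N. cis2pi (p k)) / of_nat N) \<longlonglongrightarrow> 0"
proof -
  define z where "z = cis2pi \<gamma>"
  have z: "z \<noteq> 1" "norm z = 1" using cis2pi_neq_1[OF assms(1)] by (simp_all add: z_def)
  have geometric: "cis2pi (p k) = cis2pi (p 0) * z ^ k" for k
    using fwd_diff_const_imp_linear[of p \<gamma> 0 k] assms(2)
    by (simp add: z_def cis2pi_add cis2pi_of_nat_mult)
  have "(\<Sum>k<N. cis2pi (p k)) = cis2pi (p 0) * ((z ^ N - 1) / (z - 1))" for N
  proof -
    have "(\<Sum>k<N. cis2pi (p k)) = (\<Sum>k<N. cis2pi (p 0) * z ^ k)"
      by (rule sum.cong[OF refl geometric])
    then show ?thesis by (simp add: sum_distrib_left[symmetric] geometric_sum[OF z(1)])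
  qed
  moreover have "norm (z ^ N - 1) \<le> 2" for N
    using norm_triangle_ineq4[of "z ^ N" 1] z(2) by (simp add: norm_power)
  ultimately have "norm ((\<Sum>k<N. cis2pi (p k)) / of_nat N) \<le> (2 / norm (z - 1)) / real N" for N
    by (simp add: norm_mult norm_divide divide_right_mono)
  then show ?thesis
    by (intro Lim_null_comparison[OF always_eventually lim_const_over_n]) blast
qed

lemma weyl_sum:
  assumes "m \<ge> 1" and "\<gamma> \<notin> \<rat>" and "\<And>k. (fwd_diff ^^ m) p k = \<gamma>"
  shows "(\<lambda>N. (\<Sum>k<N. cis2pi (p k)) / of_nat N) \<longlonglongrightarrow> 0"
  using assms
proof (induction m arbitrary: p \<gamma> rule: nat_induct_at_least)
  case base
  then show ?case using weyl_sum_linear[of \<gamma> p] by simp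
next
  case (Suc m)
  show ?case
  proof (rule van_der_corput)
    fix r :: nat assume "r \<ge> 1"
    define q where "q k = p (k + r) - p k" for k
    have "(fwd_diff ^^ m) q k = real r * \<gamma>" for k
    proof -
      have "fwd_diff ((fwd_diff ^^ m) p) k = \<gamma>" for k
        using Suc.prems(2)[of k] by simp
      then show ?thesis
        unfolding q_def funpow_fwd_diff_diff funpow_fwd_diff_shift
        using fwd_diff_const_imp_linear[of "(fwd_diff ^^ m) p" \<gamma> k r] by simp
    qed
    moreover have "real r * \<gamma> \<notin> \<rat>"
    proof
      assume "real r * \<gamma> \<in> \<rat>"
      then have "(real r * \<gamma>) / real r \<in> \<rat>" by (intro Rats_divide) auto
      with \<open>r \<ge> 1\<close> Suc.prems(1) show False by simp
    qed
    ultimately have "(\<lambda>N. (\<Sum>k<N. cis2pi (q k)) / of_nat N) \<longlonglongrightarrow> 0"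
      using Suc.IH by blast
    then show "(\<lambda>N. (\<Sum>k<N. cis2pi (p (k + r)) * cnj (cis2pi (p k))) / of_nat N) \<longlonglongrightarrow> 0"
      by (simp add: q_def cis2pi_diff)
  qed simp
qed

lemma funpow_fwd_diff_polynomial:
  assumes "finite I" "m \<in> I" "\<And>i. i \<in> I \<Longrightarrow> i > m \<Longrightarrow> a i = 0"
  shows "(fwd_diff ^^ m) (\<lambda>k. \<Sum>i\<in>I. a i * (real k + c) ^ i) k = a m * fact m"
proof -
  have "(fwd_diff ^^ m) (\<lambda>k. \<Sum>i\<in>I. a i * (real k + c) ^ i) k
      = (\<Sum>i\<in>I. a i * (fwd_diff ^^ m) (\<lambda>k. (real k + c) ^ i) k)"
    by (simp only: funpow_fwd_diff_lincomb)
  also have "\<dots> = (\<Sum>i\<in>I. if i = m then a m * fact m else 0)"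
  proof (rule sum.cong[OF refl])
    fix i assume "i \<in> I"
    then show "a i * (fwd_diff ^^ m) (\<lambda>k. (real k + c) ^ i) k = (if i = m then a m * fact m else 0)"
      using assms(3)[of i] funpow_fwd_diff_power[of i m c] by (cases "i \<le> m") auto
  qed
  also have "\<dots> = a m * fact m"
    using assms(1,2) by simp
  finally show ?thesis .
qed

lemma weyl_sum_monomials:
  fixes h :: "nat \<Rightarrow> int"
  assumes "\<zeta> \<notin> \<rat>" and "i0 \<in> {1..d}" "h i0 \<noteq> 0"
  shows "(\<lambda>N. (\<Sum>k<N. cis2pi (\<Sum>i\<in>{1..d}. of_int (h i) * (\<zeta> * (real k + 1) ^ i))) / of_nat N)
           \<longlonglongrightarrow> 0"
proof -
  define S where "S = {i\<in>{1..d}. h i \<noteq> 0}"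
  define m where "m = Max S"
  have "finite S" "S \<noteq> {}" using assms(2,3) unfolding S_def by auto
  then have m: "m \<in> {1..d}" "h m \<noteq> 0"
    using Max_in[of S] unfolding m_def S_def by auto
  have above_m: "h i = 0" if "i \<in> {1..d}" "i > m" for i
    using Max_ge[OF \<open>finite S\<close>, of i] that unfolding m_def S_def by fastforce
  define \<gamma> where "\<gamma> = of_int (h m) * \<zeta> * fact m"
  have "(fwd_diff ^^ m) (\<lambda>k. \<Sum>i\<in>{1..d}. (of_int (h i) * \<zeta>) * (real k + 1) ^ i) k = \<gamma>" for k
    unfolding \<gamma>_def using m above_m by (intro funpow_fwd_diff_polynomial) auto
  moreover have "\<gamma> \<notin> \<rat>"
  proof
    assume "\<gamma> \<in> \<rat>"
    moreover have "real_of_int (h m) * fact m \<in> \<rat>"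
      by (metis Rats_mult Rats_of_int Rats_of_nat of_nat_fact)
    ultimately have "\<gamma> / (of_int (h m) * fact m) \<in> \<rat>"
      by (rule Rats_divide)
    with m(2) assms(1) show False unfolding \<gamma>_def by simp
  qed
  ultimately show ?thesis
    using weyl_sum[of m \<gamma>] m(1) by (simp add: mult.assoc)
qed

lemma orbit_average_character:
  fixes h :: "nat \<Rightarrow> int"
  assumes "\<zeta> \<notin> \<rat>"
  shows "(\<lambda>N. (\<Sum>k<N. cis2pi (\<Sum>i\<in>{1..d}. of_int (h i) * (\<zeta> * (real k + 1) ^ i))) / of_nat N)
           \<longlonglongrightarrow> (if \<forall>i\<in>{1..d}. h i = 0 then 1 else 0)"
proof (cases "\<forall>i\<in>{1..d}. h i = 0")
  case True
  then have "(\<Sum>i\<in>{1..d}. of_int (h i) * (\<zeta> * (real k + 1) ^ i)) = 0" for k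
    by simp
  then have "\<forall>\<^sub>F N in sequentially.
      (\<Sum>k<N. cis2pi (\<Sum>i\<in>{1..d}. of_int (h i) * (\<zeta> * (real k + 1) ^ i))) / of_nat N = 1"
    by (simp add: eventually_sequentially exI[of _ 1])
  with True show ?thesis
    by (simp add: tendsto_eventually)
next
  case False
  then obtain i where "i \<in> {1..d}" "h i \<noteq> 0" by blast
  then show ?thesis
    using weyl_sum_monomials[OF assms] by (simp only: if_not_P[OF False])
qed

section \<open>Density of the polynomial orbit\<close>

lemma cos_power_expansion:
  "complex_of_real (cos (pi * t) ^ (2 * M)) =
     (\<Sum>a\<le>2 * M. of_nat (2 * M choose a) / 4 ^ M * cis2pi (of_int (int a - int M) * t))"
proof -
  have cos_eq: "complex_of_real (cos (pi * t)) = (cis (pi * t) + cis (- (pi * t))) / 2"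
    by (simp add: complex_eq_iff)
  have "complex_of_real (cos (pi * t) ^ (2 * M)) = (cis (pi * t) + cis (- (pi * t))) ^ (2 * M) / 4 ^ M"
    unfolding of_real_power cos_eq by (simp add: power_divide power_mult)
  also have "\<dots> = (\<Sum>a\<le>2 * M.
      of_nat (2 * M choose a) * cis (pi * t) ^ a * cis (- (pi * t)) ^ (2 * M - a)) / 4 ^ M"
    by (simp add: binomial_ring)
  also have "\<dots> = (\<Sum>a\<le>2 * M. of_nat (2 * M choose a) / 4 ^ M * cis2pi (of_int (int a - int M) * t))"
    unfolding sum_divide_distrib
  proof (intro sum.cong refl)
    fix a assume "a \<in> {..2 * M}"
    then have "real a * (pi * t) + real (2 * M - a) * (- (pi * t))
        = 2 * pi * (of_int (int a - int M) * t)"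
      by (simp add: algebra_simps)
    then have "cis (pi * t) ^ a * cis (- (pi * t)) ^ (2 * M - a) = cis2pi (of_int (int a - int M) * t)"
      by (simp add: Complex.DeMoivre cis_mult cis2pi_def)
    then show "of_nat (2 * M choose a) * cis (pi * t) ^ a * cis (- (pi * t)) ^ (2 * M - a) / 4 ^ M
        = of_nat (2 * M choose a) / 4 ^ M * cis2pi (of_int (int a - int M) * t)"
      by (simp add: mult.assoc)
  qed
  finally show ?thesis .
qed

definition cos_kernel :: "nat \<Rightarrow> nat \<Rightarrow> (nat \<Rightarrow> real) \<Rightarrow> (nat \<Rightarrow> real) \<Rightarrow> real" where
  "cos_kernel d M c y = (\<Prod>i\<in>{1..d}. cos (pi * (y i - c i)) ^ (2 * M))"

lemma cos_kernel_expansion: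
  "complex_of_real (cos_kernel d M c y) =
     (\<Sum>\<alpha>\<in>PiE {1..d} (\<lambda>_. {..2 * M}).
        (\<Prod>i\<in>{1..d}. of_nat (2 * M choose \<alpha> i) / 4 ^ M * cis2pi (- (of_int (int (\<alpha> i) - int M) * c i)))
        * cis2pi (\<Sum>i\<in>{1..d}. of_int (int (\<alpha> i) - int M) * y i))"
proof -
  have "complex_of_real (cos_kernel d M c y)
      = (\<Prod>i\<in>{1..d}. \<Sum>a\<le>2 * M.
          of_nat (2 * M choose a) / 4 ^ M * cis2pi (of_int (int a - int M) * (y i - c i)))"
    unfolding cos_kernel_def of_real_prod cos_power_expansion ..
  also have "\<dots> = (\<Sum>\<alpha>\<in>PiE {1..d} (\<lambda>_. {..2 * M}).
      \<Prod>i\<in>{1..d}. of_nat (2 * M choose \<alpha> i) / 4 ^ M * cis2pi (of_int (int (\<alpha> i) - int M) * (y i - c i)))"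
    by (rule prod_sum_PiE) auto
  also have "\<dots> = (\<Sum>\<alpha>\<in>PiE {1..d} (\<lambda>_. {..2 * M}).
        (\<Prod>i\<in>{1..d}. of_nat (2 * M choose \<alpha> i) / 4 ^ M * cis2pi (- (of_int (int (\<alpha> i) - int M) * c i)))
        * cis2pi (\<Sum>i\<in>{1..d}. of_int (int (\<alpha> i) - int M) * y i))"
  proof (rule sum.cong[OF refl])
    fix \<alpha> :: "nat \<Rightarrow> nat"
    define b where "b i = (of_nat (2 * M choose \<alpha> i) / 4 ^ M :: complex)" for i
    define n where "n i = real_of_int (int (\<alpha> i) - int M)" for i
    have "b i * cis2pi (n i * (y i - c i)) = (b i * cis2pi (- (n i * c i))) * cis2pi (n i * y i)" for i
      unfolding mult.assoc cis2pi_add[symmetric] by (simp add: algebra_simps)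
    then have "(\<Prod>i\<in>{1..d}. b i * cis2pi (n i * (y i - c i)))
        = (\<Prod>i\<in>{1..d}. b i * cis2pi (- (n i * c i))) * cis2pi (\<Sum>i\<in>{1..d}. n i * y i)"
      by (simp only: prod.distrib cis2pi_sum[OF finite_atLeastAtMost])
    then show "(\<Prod>i\<in>{1..d}. of_nat (2 * M choose \<alpha> i) / 4 ^ M
          * cis2pi (of_int (int (\<alpha> i) - int M) * (y i - c i)))
        = (\<Prod>i\<in>{1..d}. of_nat (2 * M choose \<alpha> i) / 4 ^ M * cis2pi (- (of_int (int (\<alpha> i) - int M) * c i)))
          * cis2pi (\<Sum>i\<in>{1..d}. of_int (int (\<alpha> i) - int M) * y i)"
      unfolding b_def n_def .
  qed
  finally show ?thesis .
qed

lemma cos_kernel_orbit_average: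
  assumes "\<zeta> \<notin> \<rat>"
  shows "(\<lambda>N. (\<Sum>k<N. cos_kernel d M c (\<lambda>i. \<zeta> * (real k + 1) ^ i)) / real N)
           \<longlonglongrightarrow> (real (2 * M choose M) / 4 ^ M) ^ d"
proof -
  define A where "A = PiE {1..d} (\<lambda>_. {..2 * M})"
  define coef where "coef \<alpha> = (\<Prod>i\<in>{1..d}. of_nat (2 * M choose \<alpha> i) / 4 ^ M
      * cis2pi (- (of_int (int (\<alpha> i) - int M) * c i)))" for \<alpha>
  define E where "E \<alpha> k = cis2pi (\<Sum>i\<in>{1..d}. of_int (int (\<alpha> i) - int M) * (\<zeta> * (real k + 1) ^ i))"
    for \<alpha> k
  define \<alpha>M where "\<alpha>M = restrict (\<lambda>_. M) {1..d}"
  have "finite A" "\<alpha>M \<in> A" unfolding A_def \<alpha>M_def by (auto intro: finite_PiE)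
  have average_eq: "complex_of_real ((\<Sum>k<N. cos_kernel d M c (\<lambda>i. \<zeta> * (real k + 1) ^ i)) / real N)
      = (\<Sum>\<alpha>\<in>A. coef \<alpha> * ((\<Sum>k<N. E \<alpha> k) / of_nat N))" for N
  proof -
    have "complex_of_real ((\<Sum>k<N. cos_kernel d M c (\<lambda>i. \<zeta> * (real k + 1) ^ i)) / real N)
        = (\<Sum>k<N. complex_of_real (cos_kernel d M c (\<lambda>i. \<zeta> * (real k + 1) ^ i))) / of_nat N"
      by simp
    also have "\<dots> = (\<Sum>k<N. \<Sum>\<alpha>\<in>A. coef \<alpha> * E \<alpha> k) / of_nat N"
      by (simp only: cos_kernel_expansion A_def coef_def E_def)
    finally show ?thesis
      by (simp add: sum.swap[of _ A] sum_distrib_left sum_divide_distrib)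
  qed
  have "(\<lambda>N. (\<Sum>k<N. E \<alpha> k) / of_nat N) \<longlonglongrightarrow> (if \<alpha> = \<alpha>M then 1 else 0)" if "\<alpha> \<in> A" for \<alpha>
  proof -
    have "(\<forall>i\<in>{1..d}. int (\<alpha> i) - int M = 0) \<longleftrightarrow> \<alpha> = \<alpha>M"
      using \<open>\<alpha> \<in> A\<close> unfolding A_def \<alpha>M_def
      by (metis PiE_restrict restrict_apply' restrict_ext eq_iff_diff_eq_0 of_nat_eq_iff)
    then show ?thesis
      unfolding E_def
      using orbit_average_character[OF assms, where d = d and h = "\<lambda>i. int (\<alpha> i) - int M"]
      by simp
  qed
  then have "(\<lambda>N. \<Sum>\<alpha>\<in>A. coef \<alpha> * ((\<Sum>k<N. E \<alpha> k) / of_nat N))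
      \<longlonglongrightarrow> (\<Sum>\<alpha>\<in>A. coef \<alpha> * (if \<alpha> = \<alpha>M then 1 else 0))"
    by (intro tendsto_intros) auto
  also have "(\<Sum>\<alpha>\<in>A. coef \<alpha> * (if \<alpha> = \<alpha>M then 1 else 0)) = coef \<alpha>M"
    using \<open>finite A\<close> \<open>\<alpha>M \<in> A\<close> by (simp add: if_distrib[of "\<lambda>x. coef _ * x"] cong: if_cong)
  also have "coef \<alpha>M = complex_of_real ((real (2 * M choose M) / 4 ^ M) ^ d)"
    unfolding coef_def \<alpha>M_def by simp
  finally show ?thesis
    unfolding average_eq[symmetric] tendsto_of_real_iff .
qed

lemma central_binomial_ge: "real (2 * M choose M) / 4 ^ M \<ge> 1 / (2 * real M + 1)"
proof -
  have "(4::nat) ^ M = (\<Sum>a\<le>2 * M. 2 * M choose a)"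
    by (simp add: choose_row_sum power_mult)
  also have "\<dots> \<le> of_nat (card {..2 * M}) * (2 * M choose M)"
    by (rule sum_bounded_above) (rule binomial_maximum')
  finally have "(4::nat) ^ M \<le> (2 * M + 1) * (2 * M choose M)"
    by simp
  then have "real ((4::nat) ^ M) \<le> real ((2 * M + 1) * (2 * M choose M))"
    by (simp only: of_nat_le_iff)
  then show ?thesis by (simp add: field_simps)
qed

lemma ex_power_less_inverse_poly:
  fixes q :: real
  assumes "0 \<le> q" "q < 1" "d \<ge> 1"
  shows "\<exists>M\<ge>1. q ^ M < (1 / (2 * real M + 1)) ^ d"
proof -
  define r where "r = root d q"
  have r: "0 \<le> r" "r < 1" "r ^ d = q" using assms unfolding r_def by auto
  then have "(\<lambda>M. real M * r ^ M) \<longlonglongrightarrow> 0"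
    by (intro powser_times_n_limit_0) simp
  then have "(\<lambda>M. 3 ^ d * (real M * r ^ M) ^ d) \<longlonglongrightarrow> 3 ^ d * 0 ^ d"
    by (intro tendsto_intros)
  then have "\<forall>\<^sub>F M in sequentially. 3 ^ d * (real M * r ^ M) ^ d < 1"
    by (rule order_tendstoD) (use assms(3) in \<open>simp add: zero_power\<close>)
  then obtain N where N: "\<And>M. M \<ge> N \<Longrightarrow> 3 ^ d * (real M * r ^ M) ^ d < 1"
    unfolding eventually_sequentially by blast
  define M where "M = Suc N"
  have "q ^ M = (r ^ M) ^ d"
    using r(3) by (metis power_mult mult.commute)
  moreover have "(2 * real M + 1) ^ d \<le> (3 * real M) ^ d"
    unfolding M_def by (intro power_mono) auto
  ultimately have "q ^ M * (2 * real M + 1) ^ d \<le> (r ^ M) ^ d * (3 * real M) ^ d"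
    using r(1) by (simp add: mult_left_mono)
  also have "\<dots> = 3 ^ d * (real M * r ^ M) ^ d"
    by (simp add: power_mult_distrib)
  also have "\<dots> < 1"
    using N[of M] by (simp add: M_def)
  finally have "q ^ M < 1 / (2 * real M + 1) ^ d"
    by (simp add: pos_less_divide_eq)
  then show ?thesis
    unfolding M_def by (auto simp: power_divide)
qed

lemma cos_sq_shift_int: "(cos (pi * (t - of_int n)))\<^sup>2 = (cos (pi * t))\<^sup>2"
proof -
  have "sin (of_int n * pi) = 0" by (simp add: sin_times_pi_eq_0)
  moreover from this have "(cos (of_int n * pi))\<^sup>2 = 1"
    using sin_cos_squared_add[of "of_int n * pi"] by simp
  ultimately show ?thesis
    by (simp add: right_diff_distrib cos_diff mult.commute power_mult_distrib)
qed

lemma cos_sq_gt_imp_near_int: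
  assumes "0 < e" "e \<le> 1/2" and "(cos (pi * t))\<^sup>2 > (cos (pi * e))\<^sup>2"
  shows "\<bar>t - of_int (round t)\<bar> < e"
proof (rule ccontr)
  define r where "r = \<bar>t - of_int (round t)\<bar>"
  assume "\<not> \<bar>t - of_int (round t)\<bar> < e"
  then have "e \<le> r" unfolding r_def by simp
  moreover have "r \<le> 1/2"
    unfolding r_def using of_int_round_abs_le[of t] by (simp add: abs_minus_commute)
  moreover have "0 \<le> r" unfolding r_def by simp
  ultimately have r: "0 \<le> pi * r" "pi * r \<le> pi / 2" "pi * e \<le> pi * r"
    by (simp_all add: mult_left_mono)
  have "0 \<le> cos (pi * r)"
    by (rule cos_ge_zero) (use r in linarith)+
  moreover have "cos (pi * r) \<le> cos (pi * e)"
    by (rule cos_monotone_0_pi_le) (use r assms(1) in auto)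
  moreover have "(cos (pi * r))\<^sup>2 = (cos (pi * t))\<^sup>2"
  proof -
    have "cos (pi * \<bar>x\<bar>) = cos (pi * x)" for x :: real
      by (simp add: abs_if)
    then show ?thesis
      unfolding r_def using cos_sq_shift_int[of t "round t"] by (simp only:)
  qed
  ultimately have "(cos (pi * t))\<^sup>2 \<le> (cos (pi * e))\<^sup>2"
    by (metis power_mono)
  with assms(3) show False by simp
qed

lemma prod_le_factor:
  fixes f :: "'a \<Rightarrow> real"
  assumes "finite I" "i \<in> I" "\<And>j. j \<in> I \<Longrightarrow> 0 \<le> f j \<and> f j \<le> 1" "f i \<le> B"
  shows "(\<Prod>j\<in>I. f j) \<le> B"
proof -
  have "(\<Prod>j\<in>I. f j) = f i * (\<Prod>j\<in>I - {i}. f j)"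
    using assms by (simp add: prod.remove)
  also have "\<dots> \<le> f i * 1"
    using assms by (intro mult_left_mono prod_le_1) auto
  finally show ?thesis using assms by simp
qed

lemma orbit_enters_cos_neighbourhood:
  assumes "\<zeta> \<notin> \<rat>" "d \<ge> 1" "0 \<le> q" "q < 1"
  shows "\<exists>k. \<forall>i\<in>{1..d}. (cos (pi * (\<zeta> * (real k + 1) ^ i - c i)))\<^sup>2 > q"
proof (rule ccontr)
  assume avoid: "\<not> ?thesis"
  obtain M where M: "M \<ge> 1" "q ^ M < (1 / (2 * real M + 1)) ^ d"
    using ex_power_less_inverse_poly[OF assms(3,4,2)] by blast
  have kernel_le: "cos_kernel d M c (\<lambda>i. \<zeta> * (real k + 1) ^ i) \<le> q ^ M" for k
  proof -
    have "\<not> (\<forall>i\<in>{1..d}. (cos (pi * (\<zeta> * (real k + 1) ^ i - c i)))\<^sup>2 > q)"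
      using avoid by blast
    then obtain i where i: "i \<in> {1..d}" "(cos (pi * (\<zeta> * (real k + 1) ^ i - c i)))\<^sup>2 \<le> q"
      by (auto simp: not_less)
    show ?thesis
      unfolding cos_kernel_def
    proof (rule prod_le_factor[OF _ i(1)])
      show "cos (pi * (\<zeta> * (real k + 1) ^ i - c i)) ^ (2 * M) \<le> q ^ M"
        using i(2) by (simp add: power_mult power_mono)
    qed (simp_all add: power_mult abs_square_le_1 power_le_one)
  qed
  have "(real (2 * M choose M) / 4 ^ M) ^ d \<le> q ^ M"
  proof (rule LIMSEQ_le_const2[OF cos_kernel_orbit_average[OF assms(1)]], intro exI allI impI)
    fix N :: nat assume "N \<ge> 1"
    have "(\<Sum>k<N. cos_kernel d M c (\<lambda>i. \<zeta> * (real k + 1) ^ i)) \<le> (\<Sum>k<N. q ^ M)"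
      by (intro sum_mono kernel_le)
    with \<open>N \<ge> 1\<close> show "(\<Sum>k<N. cos_kernel d M c (\<lambda>i. \<zeta> * (real k + 1) ^ i)) / real N \<le> q ^ M"
      by (simp add: field_simps)
  qed
  moreover have "(1 / (2 * real M + 1)) ^ d \<le> (real (2 * M choose M) / 4 ^ M) ^ d"
    by (intro power_mono central_binomial_ge) auto
  ultimately show False
    using M(2) by linarith
qed

lemma torus_proj_in_torus: "torus_proj d y \<in> torus d"
  unfolding torus_proj_def torus_def by (auto simp: frac_lt_1)

lemma torus_proj_id: "x \<in> torus d \<Longrightarrow> torus_proj d x = x"
  unfolding torus_def torus_proj_def by (auto simp: fun_eq_iff)

lemma torus_proj_cong:
  "(\<And>i. i \<in> {1..d} \<Longrightarrow> frac (y i) = frac (z i)) \<Longrightarrow> torus_proj d y = torus_proj d z"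
  unfolding torus_proj_def by auto

lemma torus_proj_translate:
  assumes "torus_proj d y = torus_proj d z"
  shows "torus_proj d (\<lambda>i. w i - y i + z i) = torus_proj d w"
proof (rule torus_proj_cong)
  fix i assume "i \<in> {1..d}"
  then have "frac (y i) = frac (z i)"
    using assms unfolding torus_proj_def by (metis (mono_tags))
  then obtain n where "y i = z i + of_int n" by (rule frac_eqE)
  then have "w i - y i + z i = w i + of_int (- n)" by simp
  then show "frac (w i - y i + z i) = frac (w i)" by (simp only: frac_add_of_int_right)
qed

lemma torus_open_contains_cos_neighbourhood:
  assumes "torus_open d V" "x \<in> V"
  shows "\<exists>q. 0 \<le> q \<and> q < 1 \<and>
           (\<forall>y. (\<forall>i\<in>{1..d}. (cos (pi * (y i - x i)))\<^sup>2 > q) \<longrightarrow> torus_proj d y \<in> V)"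
proof -
  have "x \<in> torus d" using assms unfolding torus_open_def by auto
  then obtain e where e: "e > 0" "\<And>z. (\<forall>i\<in>{1..d}. \<bar>z i - x i\<bar> < e) \<Longrightarrow> torus_proj d z \<in> V"
    using assms torus_proj_id unfolding torus_open_def by metis
  define e' where "e' = min e (1/2)"
  have e': "0 < e'" "e' \<le> 1/2" "e' \<le> e" unfolding e'_def using e by auto
  define q where "q = (cos (pi * e'))\<^sup>2"
  have "0 \<le> pi * e'" "pi * e' \<le> pi / 2"
    using e' by (simp_all add: mult_left_mono)
  then have "0 \<le> cos (pi * e')"
    by (intro cos_ge_zero) linarith+
  moreover have "cos (pi * e') < cos 0"
    using e' by (intro cos_monotone_0_pi) auto
  ultimately have "0 \<le> q" "q < 1"
    unfolding q_def by (simp_all add: abs_square_less_1)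
  moreover have "torus_proj d y \<in> V" if y: "\<forall>i\<in>{1..d}. (cos (pi * (y i - x i)))\<^sup>2 > q" for y
  proof -
    define z where "z i = y i - of_int (round (y i - x i))" for i
    have "\<bar>z i - x i\<bar> < e" if "i \<in> {1..d}" for i
      using cos_sq_gt_imp_near_int[of e' "y i - x i"] e' y that unfolding z_def q_def by auto
    then have "torus_proj d z \<in> V" by (intro e(2)) blast
    moreover have "torus_proj d z = torus_proj d y"
      unfolding z_def
      by (intro torus_proj_cong) (metis diff_conv_add_uminus frac_add_of_int_right of_int_minus)
    ultimately show ?thesis by simp
  qed
  ultimately show ?thesis by blast
qed

lemma polynomial_orbit_dense:
  assumes "\<zeta> \<notin> \<rat>" "d \<ge> 1" "torus_open d V" "V \<noteq> {}"
  shows "\<exists>k\<ge>1. torus_proj d (\<lambda>i. \<zeta> * real k ^ i) \<in> V"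
proof -
  obtain x where "x \<in> V" using assms(4) by auto
  then obtain q where q: "0 \<le> q" "q < 1"
    and V: "\<And>y. (\<forall>i\<in>{1..d}. (cos (pi * (y i - x i)))\<^sup>2 > q) \<Longrightarrow> torus_proj d y \<in> V"
    using torus_open_contains_cos_neighbourhood[OF assms(3)] by blast
  obtain k where "\<forall>i\<in>{1..d}. (cos (pi * (\<zeta> * (real k + 1) ^ i - x i)))\<^sup>2 > q"
    using orbit_enters_cos_neighbourhood[OF assms(1,2) q] by blast
  then have "torus_proj d (\<lambda>i. \<zeta> * (real k + 1) ^ i) \<in> V"
    by (rule V)
  then have "torus_proj d (\<lambda>i. \<zeta> * real (Suc k) ^ i) \<in> V"
    by (simp only: of_nat_Suc add.commute)
  moreover have "Suc k \<ge> 1" by simp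
  ultimately show ?thesis by (intro exI[of _ "Suc k"] conjI)
qed

section \<open>Leading digits\<close>

lemma log_interval_iff_floor_powr:
  fixes B f :: real and t :: nat
  assumes "B > 1" "t \<ge> 1"
  shows "log B (real t) \<le> f \<and> f < log B (real t + 1) \<longleftrightarrow> t = nat \<lfloor>B powr f\<rfloor>"
proof -
  have "log B (real t) \<le> f \<and> f < log B (real t + 1) \<longleftrightarrow> real t \<le> B powr f \<and> B powr f < real t + 1"
    using assms by (simp add: log_le_iff less_log_iff)
  also have "\<dots> \<longleftrightarrow> \<lfloor>B powr f\<rfloor> = int t"
    by (simp add: floor_eq_iff)
  also have "\<dots> \<longleftrightarrow> t = nat \<lfloor>B powr f\<rfloor>"
    using assms(2) by linarith
  finally show ?thesis .
qed

lemma digit_interval_iff: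
  fixes b :: nat and x :: real and t :: nat
  assumes "b \<ge> 2" "x > 0" "t \<ge> 1" "t + 1 \<le> b"
  shows "(\<exists>m::int. real b powr of_int m * real t \<le> x \<and> x < real b powr of_int m * real (t + 1))
     \<longleftrightarrow> log b (real t) \<le> frac (log b x) \<and> frac (log b x) < log b (real t + 1)"
proof -
  have b: "real b > 1" using assms(1) by simp
  have log_scaled: "log b (real b powr of_int m * s) = of_int m + log b s" if "s > 0" for m :: int and s
    using b that by (simp add: log_mult)
  have le_iff: "real b powr of_int m * s \<le> x \<longleftrightarrow> of_int m + log b s \<le> log b x"
    if "s > 0" for m :: int and s
    using log_le_cancel_iff[OF b, of "real b powr of_int m * s" x] b that assms(2) log_scaled[OF that]
    by simp
  have less_iff: "x < real b powr of_int m * s \<longleftrightarrow> log b x < of_int m + log b s"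
    if "s > 0" for m :: int and s
    using log_less_cancel_iff[OF b, of x "real b powr of_int m * s"] b that assms(2) log_scaled[OF that]
    by simp
  have interval_iff: "real b powr of_int m * real t \<le> x \<and> x < real b powr of_int m * real (t + 1)
      \<longleftrightarrow> of_int m + log b (real t) \<le> log b x \<and> log b x < of_int m + log b (real t + 1)" for m :: int
    using le_iff[of t m] less_iff[of "real t + 1" m] assms(3) by (simp add: add.commute)
  have "0 \<le> log b (real t)" "log b (real t + 1) \<le> 1"
    using b assms(3,4) by simp_all
  then have "of_int m + log b (real t) \<le> log b x \<and> log b x < of_int m + log b (real t + 1)
      \<longleftrightarrow> m = \<lfloor>log b x\<rfloor> \<and> log b (real t) \<le> frac (log b x) \<and> frac (log b x) < log b (real t + 1)"
    for m :: int
    unfolding frac_def using floor_eq_iff[of "log b x" m] by (auto simp: eq_commute[of m])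
  then show ?thesis
    unfolding interval_iff by blast
qed

lemma msd_eq_floor_powr:
  assumes "b \<ge> 2" "x \<noteq> 0"
  shows "msd b x = nat \<lfloor>real b powr frac (log b \<bar>x\<bar>)\<rfloor>"
proof -
  define t where "t = nat \<lfloor>real b powr frac (log b \<bar>x\<bar>)\<rfloor>"
  have b: "real b > 1" using assms(1) by simp
  have "1 \<le> real b powr frac (log b \<bar>x\<bar>)" "real b powr frac (log b \<bar>x\<bar>) < real b"
    using b powr_less_mono[OF frac_lt_1 b] by (simp_all add: ge_one_powr_ge_zero)
  then have "1 \<le> t" "t < b"
    unfolding t_def by (simp_all add: le_nat_iff nat_less_iff floor_less_iff)
  then have t: "t \<in> {1..b-1}" by simp
  have "(\<exists>m::int. real b powr of_int m * real j \<le> \<bar>x\<bar> \<and> \<bar>x\<bar> < real b powr of_int m * real (j+1))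
      \<longleftrightarrow> j = t" if "j \<in> {1..b-1}" for j
  proof -
    have "j \<ge> 1" "j + 1 \<le> b" using that assms(1) by auto
    then show ?thesis
      using digit_interval_iff[OF assms(1) _ \<open>j \<ge> 1\<close> \<open>j + 1 \<le> b\<close>, of "\<bar>x\<bar>"]
        log_interval_iff_floor_powr[OF b \<open>j \<ge> 1\<close>] assms(2)
      unfolding t_def by simp
  qed
  then have "j \<in> {1..b-1} \<and>
      (\<exists>m::int. real b powr of_int m * real j \<le> \<bar>x\<bar> \<and> \<bar>x\<bar> < real b powr of_int m * real (j+1))
      \<longleftrightarrow> j = t" for j
    using t by blast
  then show ?thesis
    unfolding msd_def t_def[symmetric] by simp
qed

section \<open>Coding the digit sequence by an orbit of the torus map\<close>

definition tmap_lift :: "nat \<Rightarrow> real \<Rightarrow> (nat \<Rightarrow> real) \<Rightarrow> (nat \<Rightarrow> real)" where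
  "tmap_lift d \<zeta> y = (\<lambda>i. if i \<in> {1..d} then \<zeta> + (\<Sum>j=1..i. real (i choose j) * y j) else 0)"

definition orbit_lift :: "real \<Rightarrow> nat \<Rightarrow> (nat \<Rightarrow> real)" where
  "orbit_lift \<zeta> k = (\<lambda>i. \<zeta> * real k ^ i)"

lemma tmap_torus_proj: "tmap d \<zeta> (torus_proj d y) = torus_proj d (tmap_lift d \<zeta> y)"
proof
  fix i
  show "tmap d \<zeta> (torus_proj d y) i = torus_proj d (tmap_lift d \<zeta> y) i"
  proof (cases "i \<in> {1..d}")
    case True
    have "(\<Sum>j=1..i. real (i choose j) * frac (y j)) - (\<Sum>j=1..i. real (i choose j) * y j)
        = (\<Sum>j=1..i. real (i choose j) * - of_int \<lfloor>y j\<rfloor>)"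
      by (simp add: frac_def sum_subtractf[symmetric] algebra_simps)
    also have "\<dots> \<in> \<int>" by (intro Ints_sum Ints_mult) auto
    finally have frac_eq: "frac (\<zeta> + (\<Sum>j=1..i. real (i choose j) * frac (y j)))
        = frac (\<zeta> + (\<Sum>j=1..i. real (i choose j) * y j))"
      by (intro frac_diff_zero) simp
    have "tmap d \<zeta> (torus_proj d y) i = frac (\<zeta> + (\<Sum>j=1..i. real (i choose j) * torus_proj d y j))"
      using True by (simp add: tmap_def)
    also have "(\<Sum>j=1..i. real (i choose j) * torus_proj d y j)
        = (\<Sum>j=1..i. real (i choose j) * frac (y j))"
      using True by (intro sum.cong refl) (auto simp: torus_proj_def)
    also note frac_eq
    also have "frac (\<zeta> + (\<Sum>j=1..i. real (i choose j) * y j)) = torus_proj d (tmap_lift d \<zeta> y) i"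
      using True by (simp add: torus_proj_def tmap_lift_def)
    finally show ?thesis .
  next
    case False
    then show ?thesis
      unfolding tmap_def torus_proj_def by (simp only: if_False)
  qed
qed

lemma funpow_tmap_torus_proj:
  "(tmap d \<zeta> ^^ n) (torus_proj d y) = torus_proj d ((tmap_lift d \<zeta> ^^ n) y)"
  by (induction n) (auto simp: tmap_torus_proj)

lemma tmap_lift_cong: "(\<And>i. i \<in> {1..d} \<Longrightarrow> y i = z i) \<Longrightarrow> tmap_lift d \<zeta> y = tmap_lift d \<zeta> z"
  unfolding tmap_lift_def by (intro ext) (auto intro!: sum.cong)

lemma tmap_lift_orbit_lift: "i \<in> {1..d} \<Longrightarrow> tmap_lift d \<zeta> (orbit_lift \<zeta> k) i = orbit_lift \<zeta> (Suc k) i"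
proof -
  assume i: "i \<in> {1..d}"
  have binomial: "(real k + 1) ^ i = 1 + (\<Sum>j=1..i. real (i choose j) * real k ^ j)"
  proof -
    have "(real k + 1) ^ i = (\<Sum>j=0..i. real (i choose j) * real k ^ j)"
      by (simp add: binomial_ring atMost_atLeast0)
    also have "\<dots> = 1 + (\<Sum>j=1..i. real (i choose j) * real k ^ j)"
      by (subst sum.atLeast_Suc_atMost) auto
    finally show ?thesis .
  qed
  have "tmap_lift d \<zeta> (orbit_lift \<zeta> k) i = \<zeta> + (\<Sum>j=1..i. real (i choose j) * (\<zeta> * real k ^ j))"
    using i by (simp add: tmap_lift_def orbit_lift_def)
  also have "\<dots> = \<zeta> * (real k + 1) ^ i"
    unfolding binomial by (simp add: distrib_left sum_distrib_left mult_ac)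
  finally show ?thesis
    by (simp add: orbit_lift_def add.commute)
qed

lemma funpow_tmap_lift_orbit_lift:
  "i \<in> {1..d} \<Longrightarrow> (tmap_lift d \<zeta> ^^ n) (orbit_lift \<zeta> k) i = orbit_lift \<zeta> (k + n) i"
proof (induction n arbitrary: i)
  case 0
  then show ?case by simp
next
  case (Suc n)
  have "(tmap_lift d \<zeta> ^^ Suc n) (orbit_lift \<zeta> k) = tmap_lift d \<zeta> (orbit_lift \<zeta> (k + n))"
    using Suc.IH by (auto intro: tmap_lift_cong)
  then show ?case
    using tmap_lift_orbit_lift[OF Suc.prems] by simp
qed

lemma funpow_tmap_orbit:
  "(tmap d \<zeta> ^^ n) (torus_proj d (orbit_lift \<zeta> k)) = torus_proj d (orbit_lift \<zeta> (k + n))"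
  unfolding funpow_tmap_torus_proj
  by (intro torus_proj_cong) (simp add: funpow_tmap_lift_orbit_lift)

lemma orbit_in_Uset_iff:
  assumes "b \<ge> 2" "a > 0" "d \<ge> 1" "t \<in> {1..b-1}"
  shows "torus_proj d (orbit_lift (log b a) k) \<in> Uset b d t \<longleftrightarrow> wseq b a d k = t"
proof -
  have "frac (log b (a ^ (k ^ d))) = torus_proj d (orbit_lift (log b a) k) d"
    using assms(2,3) by (simp add: log_nat_power torus_proj_def orbit_lift_def mult.commute)
  then have "wseq b a d k = nat \<lfloor>real b powr torus_proj d (orbit_lift (log b a) k) d\<rfloor>"
    using assms(1,2) by (simp add: wseq_def msd_eq_floor_powr)
  moreover have "real b > 1" "t \<ge> 1" using assms(1,4) by auto
  ultimately show ?thesis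
    unfolding Uset_def using torus_proj_in_torus log_interval_iff_floor_powr by auto
qed

lemma is_factor_iff_orbit_in_Uword:
  assumes "b \<ge> 2" "a > 0" "d \<ge> 1" "set u \<subseteq> {1..b-1}"
  shows "is_factor u (wseq b a d) \<longleftrightarrow>
         (\<exists>k\<ge>1. torus_proj d (orbit_lift (log b a) k) \<in> Uword b d (log b a) u)"
proof -
  have "torus_proj d (orbit_lift (log b a) k) \<in> Uword b d (log b a) u
      \<longleftrightarrow> (\<forall>i<length u. u ! i = wseq b a d (k + i))" for k
    using orbit_in_Uset_iff[OF assms(1-3)] assms(4) nth_mem
    by (auto simp: Uword_def funpow_tmap_orbit torus_proj_in_torus subset_iff)
  then show ?thesis
    unfolding is_factor_def by simp
qed

section \<open>Cylinder sets with nonempty interior\<close>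

lemma tmap_lift_shift_last:
  assumes "d \<ge> 1"
  shows "tmap_lift d \<zeta> (y(d := y d + s)) = (tmap_lift d \<zeta> y)(d := tmap_lift d \<zeta> y d + s)"
proof
  fix i
  show "tmap_lift d \<zeta> (y(d := y d + s)) i = ((tmap_lift d \<zeta> y)(d := tmap_lift d \<zeta> y d + s)) i"
  proof (cases "i = d")
    case True
    have "(\<Sum>j=1..d. real (d choose j) * (y(d := y d + s)) j)
        = (\<Sum>j=1..d. real (d choose j) * y j + (if j = d then s else 0))"
      by (intro sum.cong) (auto simp: algebra_simps)
    also have "\<dots> = (\<Sum>j=1..d. real (d choose j) * y j) + s"
      using assms by (simp add: sum.distrib)
    finally have "(\<Sum>j=1..d. real (d choose j) * (y(d := y d + s)) j)
        = (\<Sum>j=1..d. real (d choose j) * y j) + s" .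
    with True assms show ?thesis by (simp add: tmap_lift_def)
  next
    case False
    then have "(\<Sum>j=1..i. real (i choose j) * (y(d := y d + s)) j) = (\<Sum>j=1..i. real (i choose j) * y j)"
      if "i \<le> d" using that by (intro sum.cong) auto
    with False show ?thesis by (simp add: tmap_lift_def)
  qed
qed

lemma funpow_tmap_lift_shift_last:
  assumes "d \<ge> 1"
  shows "(tmap_lift d \<zeta> ^^ n) (y(d := y d + s))
           = ((tmap_lift d \<zeta> ^^ n) y)(d := (tmap_lift d \<zeta> ^^ n) y d + s)"
  by (induction n) (simp_all only: funpow.simps comp_apply id_apply tmap_lift_shift_last[OF assms])

lemma tmap_lift_dist_less:
  assumes "\<And>j. j \<in> {1..d} \<Longrightarrow> \<bar>y j - z j\<bar> < \<rho>" and "i \<in> {1..d}"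
  shows "\<bar>tmap_lift d \<zeta> y i - tmap_lift d \<zeta> z i\<bar> < 2 ^ d * \<rho>"
proof -
  have \<rho>: "0 \<le> \<rho>"
    using assms(1)[OF assms(2)] by linarith
  have "tmap_lift d \<zeta> y i - tmap_lift d \<zeta> z i = (\<Sum>j=1..i. real (i choose j) * (y j - z j))"
    using assms(2) by (simp add: tmap_lift_def sum_subtractf[symmetric] right_diff_distrib)
  then have "\<bar>tmap_lift d \<zeta> y i - tmap_lift d \<zeta> z i\<bar> \<le> (\<Sum>j=1..i. real (i choose j) * \<bar>y j - z j\<bar>)"
    by (simp add: order.trans[OF sum_abs] abs_mult)
  also have "\<dots> < (\<Sum>j=1..i. real (i choose j) * \<rho>)"
    using assms by (intro sum_strict_mono mult_strict_left_mono) auto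
  also have "\<dots> = (\<Sum>j=1..i. real (i choose j)) * \<rho>"
    by (simp add: sum_distrib_right)
  also have "\<dots> \<le> (\<Sum>j\<le>i. real (i choose j)) * \<rho>"
    using \<rho> by (intro mult_right_mono sum_mono2) auto
  also have "\<dots> = 2 ^ i * \<rho>"
    by (simp flip: of_nat_sum add: choose_row_sum)
  also have "\<dots> \<le> 2 ^ d * \<rho>"
    using assms(2) \<rho> by (intro mult_right_mono power_increasing) auto
  finally show ?thesis .
qed

lemma funpow_tmap_lift_dist_less:
  assumes "\<And>j. j \<in> {1..d} \<Longrightarrow> \<bar>y j - z j\<bar> < \<rho>" and "i \<in> {1..d}"
  shows "\<bar>(tmap_lift d \<zeta> ^^ n) y i - (tmap_lift d \<zeta> ^^ n) z i\<bar> < (2 ^ d) ^ n * \<rho>"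
  using assms(2)
proof (induction n arbitrary: i)
  case 0
  then show ?case using assms(1) by simp
next
  case (Suc n)
  then show ?case
    using tmap_lift_dist_less[of d "(tmap_lift d \<zeta> ^^ n) y" "(tmap_lift d \<zeta> ^^ n) z" "(2 ^ d) ^ n * \<rho>"]
    by (simp add: mult_ac)
qed

lemma torus_open_proj_box:
  assumes "\<eta> > 0"
  shows "torus_open d (torus_proj d ` {z. \<forall>i\<in>{1..d}. \<bar>z i - c i\<bar> < \<eta>})"
proof -
  define B where "B = {z. \<forall>i\<in>{1..d}. \<bar>z i - c i\<bar> < \<eta>}"
  have "\<exists>e>0. \<forall>w. (\<forall>i\<in>{1..d}. \<bar>w i - y i\<bar> < e) \<longrightarrow> torus_proj d w \<in> torus_proj d ` B"
    if y: "torus_proj d y \<in> torus_proj d ` B" for y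
  proof -
    obtain z where z: "z \<in> B" "torus_proj d y = torus_proj d z"
      using y by auto
    define \<rho> where "\<rho> = Max (insert 0 ((\<lambda>i. \<bar>z i - c i\<bar>) ` {1..d}))"
    have \<rho>_ge: "\<bar>z i - c i\<bar> \<le> \<rho>" if "i \<in> {1..d}" for i
      unfolding \<rho>_def using that by (intro Max_ge) auto
    have "\<rho> < \<eta>"
      using z(1) assms unfolding \<rho>_def B_def by (subst Max_less_iff) auto
    have "torus_proj d w \<in> torus_proj d ` B" if w: "\<forall>i\<in>{1..d}. \<bar>w i - y i\<bar> < \<eta> - \<rho>" for w
    proof -
      note eq = torus_proj_translate[OF z(2), of w]
      have "\<bar>w i - y i + z i - c i\<bar> < \<eta>" if "i \<in> {1..d}" for i
      proof -
        have "\<bar>w i - y i + z i - c i\<bar> \<le> \<bar>w i - y i\<bar> + \<bar>z i - c i\<bar>"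
          using abs_triangle_ineq[of "w i - y i" "z i - c i"] by (simp add: add_diff_eq)
        then show ?thesis
          using bspec[OF w that] \<rho>_ge[OF that] by linarith
      qed
      then have "(\<lambda>i. w i - y i + z i) \<in> B"
        unfolding B_def by simp
      from image_eqI[where f = "torus_proj d", OF eq[symmetric] this] show ?thesis .
    qed
    moreover have "\<eta> - \<rho> > 0" using \<open>\<rho> < \<eta>\<close> by simp
    ultimately show ?thesis by blast
  qed
  moreover have "torus_proj d ` B \<subseteq> torus d"
    using torus_proj_in_torus by auto
  ultimately show ?thesis
    unfolding torus_open_def B_def by blast
qed

lemma Uset_shift_last:
  assumes "b \<ge> 2" "t \<ge> 1" "t + 1 \<le> b" "d \<ge> 1" and Y: "torus_proj d Y \<in> Uset b d t"
    and "0 \<le> \<delta>" "frac (Y d) + \<delta> < log b (real t + 1)" and "Z d = Y d + \<delta>"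
  shows "torus_proj d Z \<in> Uset b d t"
proof -
  have "log b (real t + 1) \<le> 1"
    using assms(1-3) by simp
  then have "frac (Z d) = frac (Y d) + \<delta>"
    using assms(6-8) by (subst frac_unique_iff) (simp add: frac_def)
  moreover have "torus_proj d X d = frac (X d)" for X
    using assms(4) by (simp add: torus_proj_def)
  moreover from this have "log b (real t) \<le> frac (Y d)"
    using Y by (simp add: Uset_def)
  ultimately show ?thesis
    using assms(6,7) torus_proj_in_torus[of d Z] by (simp add: Uset_def)
qed

lemma Uword_contains_box:
  assumes b: "b \<ge> 2" and d: "d \<ge> 1" and u: "set u \<subseteq> {1..b-1}"
    and y: "torus_proj d y \<in> Uword b d \<zeta> u"
  shows "\<exists>c \<eta>. \<eta> > 0 \<and> (\<forall>z. (\<forall>i\<in>{1..d}. \<bar>z i - c i\<bar> < \<eta>) \<longrightarrow> torus_proj d z \<in> Uword b d \<zeta> u)"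
proof -
  define F where "F n = (tmap_lift d \<zeta> ^^ n)" for n
  define gap where "gap n = log b (real (u ! n) + 1) - frac (F n y d)" for n
  have in_U: "torus_proj d (F n y) \<in> Uset b d (u ! n)" if "n < length u" for n
    using y that by (simp add: Uword_def F_def funpow_tmap_torus_proj)
  have "gap n > 0" if "n < length u" for n
    using in_U[OF that] d by (simp add: gap_def Uset_def torus_proj_def)
  define g where "g = Min (insert 1 (gap ` {..<length u}))"
  have "g > 0"
    using \<open>\<And>n. n < length u \<Longrightarrow> gap n > 0\<close> by (simp add: g_def)
  have g_le: "g \<le> gap n" if "n < length u" for n
    unfolding g_def using that by (intro Min_le) auto
  \<comment> \<open>\<open>f\<close> stretches distances by at most \<open>2\<^sup>d\<close>, so along the first \<open>length u\<close> steps
    the image of the box stays within \<open>g/4\<close> of the orbit of \<open>c\<close>.\<close>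
  define \<eta> where "\<eta> = g / (4 * (2 ^ d) ^ length u)"
  define c where "c = y(d := y d + g / 2)"
  have "\<eta> > 0" using \<open>g > 0\<close> by (simp add: \<eta>_def)
  have "torus_proj d z \<in> Uword b d \<zeta> u" if z: "\<forall>i\<in>{1..d}. \<bar>z i - c i\<bar> < \<eta>" for z
  proof -
    have "torus_proj d (F n z) \<in> Uset b d (u ! n)" if n: "n < length u" for n
    proof -
      have "\<bar>F n z d - F n c d\<bar> < (2 ^ d) ^ n * \<eta>"
        unfolding F_def using z d by (intro funpow_tmap_lift_dist_less) auto
      also have "\<dots> \<le> (2 ^ d) ^ length u * \<eta>"
        using n \<open>\<eta> > 0\<close> by (intro mult_right_mono power_increasing) auto
      also have "\<dots> = g / 4"
        by (simp add: \<eta>_def)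
      finally have "\<bar>F n z d - F n c d\<bar> < g / 4" .
      moreover have "F n c d = F n y d + g / 2"
        unfolding F_def c_def funpow_tmap_lift_shift_last[OF d] by simp
      ultimately have "0 \<le> F n z d - F n y d" "F n z d - F n y d < g"
        using \<open>g > 0\<close> by linarith+
      moreover have "u ! n \<in> {1..b-1}"
        using u n nth_mem by blast
      ultimately show ?thesis
        using g_le[OF n] unfolding gap_def
        by (intro Uset_shift_last[OF b _ _ d in_U[OF n], where \<delta> = "F n z d - F n y d"]) auto
    qed
    then show ?thesis
      by (simp add: Uword_def F_def funpow_tmap_torus_proj torus_proj_in_torus)
  qed
  with \<open>\<eta> > 0\<close> show ?thesis
    by (intro exI[of _ c] exI[of _ \<eta>]) simp
qed

lemma Uword_nonempty_interior:
  assumes "b \<ge> 2" "d \<ge> 1" "set u \<subseteq> {1..b-1}" "torus_proj d y \<in> Uword b d \<zeta> u"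
  shows "torus_nonempty_interior d (Uword b d \<zeta> u)"
proof -
  obtain c \<eta> where "\<eta> > 0"
    and box: "\<And>z. \<forall>i\<in>{1..d}. \<bar>z i - c i\<bar> < \<eta> \<Longrightarrow> torus_proj d z \<in> Uword b d \<zeta> u"
    using Uword_contains_box[OF assms] by blast
  define V where "V = torus_proj d ` {z. \<forall>i\<in>{1..d}. \<bar>z i - c i\<bar> < \<eta>}"
  have "torus_open d V"
    unfolding V_def using \<open>\<eta> > 0\<close> by (rule torus_open_proj_box)
  moreover have "torus_proj d c \<in> V"
    unfolding V_def using \<open>\<eta> > 0\<close> by auto
  moreover have "V \<subseteq> Uword b d \<zeta> u"
    unfolding V_def using box by auto
  ultimately show ?thesis
    unfolding torus_nonempty_interior_def by blast
qed

theorem mainTheorem3: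
  fixes d b :: nat and a :: real and u :: "nat list"
  assumes "d \<ge> 1" and "b \<ge> 5" and "a > 0"
    and "log (real b) a \<notin> \<rat>"
    and "set u \<subseteq> {1..b-1}"
  shows "is_factor u (wseq b a d) \<longleftrightarrow>
         torus_nonempty_interior d (Uword b d (log (real b) a) u)"
proof -
  have b: "b \<ge> 2" using assms(2) by simp
  note factor_iff = is_factor_iff_orbit_in_Uword[OF b assms(3,1,5)]
  show ?thesis
  proof
    assume "is_factor u (wseq b a d)"
    then obtain k where "torus_proj d (orbit_lift (log b a) k) \<in> Uword b d (log b a) u"
      using factor_iff by blast
    then show "torus_nonempty_interior d (Uword b d (log b a) u)"
      by (rule Uword_nonempty_interior[OF b assms(1,5)])
  next
    assume "torus_nonempty_interior d (Uword b d (log b a) u)"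
    then obtain V where V: "torus_open d V" "V \<noteq> {}" "V \<subseteq> Uword b d (log b a) u"
      unfolding torus_nonempty_interior_def by blast
    obtain k where "k \<ge> 1" "torus_proj d (orbit_lift (log b a) k) \<in> V"
      using polynomial_orbit_dense[OF assms(4,1) V(1,2)] unfolding orbit_lift_def by blast
    then show "is_factor u (wseq b a d)"
      using factor_iff V(3) by blast
  qed
qed

end
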